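(* Let $R$ be a ring with identity and $a,b,c,p,q\in R$, and suppose there exist $p',q'\in R$ with $q'qc=c$ and $bpp'=b$. The following are equivalent: (i) $paq$ is $(b,c)$-invertible; (ii) $pa$ is right $(qb,qc)$-invertible and $aq$ is left $(bp,cp)$-invertible. Moreover, if $y$ is the $(b,c)$-inverse of $paq$, $x$ is any right $(qb,qc)$-inverse of $pa$ and $z$ is any left $(bp,cp)$-inverse of $aq$, then $y=zax$.
   Context: For $x\in R$: $xR=\{xr:r\in R\}$, $Rx=\{rx:r\in R\}$. For $\alpha,b,c\in R$: $y$ is a left $(b,c)$-inverse of $\alpha$ if $Ry\subseteq Rc$ and $y\alpha b=b$; a right $(b,c)$-inverse if $yR\subseteq bR$ and $c\alpha y=c$; $\alpha$ is left/right $(b,c)$-invertible if such $y$ exists. $\alpha$ is $(b,c)$-invertible if there is $y\in R$ with $y\in (bRy)\cap(yRc)$, $y\alpha b=b$ and $c\alpha y=c$; such $y$ is unique and called the $(b,c)$-inverse of $\alpha$. *)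

theory Defs
  imports Main
begin

definition left_mult_set :: "'a::ring_1 \<Rightarrow> 'a set" where
  "left_mult_set x = {r * x | r. True}"

definition right_mult_set :: "'a::ring_1 \<Rightarrow> 'a set" where
  "right_mult_set x = {x * r | r. True}"

definition left_bc_inverse :: "'a::ring_1 \<Rightarrow> 'a \<Rightarrow> 'a \<Rightarrow> 'a \<Rightarrow> bool" where
  "left_bc_inverse y a b c \<longleftrightarrow> left_mult_set y \<subseteq> left_mult_set c \<and> y * a * b = b"

definition right_bc_inverse :: "'a::ring_1 \<Rightarrow> 'a \<Rightarrow> 'a \<Rightarrow> 'a \<Rightarrow> bool" where
  "right_bc_inverse y a b c \<longleftrightarrow> right_mult_set y \<subseteq> right_mult_set b \<and> c * a * y = c"

definition left_bc_invertible :: "'a::ring_1 \<Rightarrow> 'a \<Rightarrow> 'a \<Rightarrow> bool" where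
  "left_bc_invertible a b c \<longleftrightarrow> (\<exists>y. left_bc_inverse y a b c)"

definition right_bc_invertible :: "'a::ring_1 \<Rightarrow> 'a \<Rightarrow> 'a \<Rightarrow> bool" where
  "right_bc_invertible a b c \<longleftrightarrow> (\<exists>y. right_bc_inverse y a b c)"

definition bc_inverse :: "'a::ring_1 \<Rightarrow> 'a \<Rightarrow> 'a \<Rightarrow> 'a \<Rightarrow> bool" where
  "bc_inverse y a b c \<longleftrightarrow>
     y \<in> {b * r * y | r. True} \<inter> {y * r * c | r. True} \<and> y * a * b = b \<and> c * a * y = c"

definition bc_invertible :: "'a::ring_1 \<Rightarrow> 'a \<Rightarrow> 'a \<Rightarrow> bool" where
  "bc_invertible a b c \<longleftrightarrow> (\<exists>y. bc_inverse y a b c)"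

end

theory Submission
  imports Defs
begin

text \<open>Cancelling \<open>q\<close> on the left of \<open>qc\<close> and \<open>p\<close> on the right of \<open>bp\<close> turns a right
  \<open>(qb,qc)\<close>-inverse \<open>x\<close> of \<open>pa\<close> and a left \<open>(bp,cp)\<close>-inverse \<open>z\<close> of \<open>aq\<close> into
  \<open>cpax = c\<close> and \<open>zaqb = b\<close>; then \<open>zax \<in> bR \<inter> Rc\<close> is the \<open>(b,c)\<close>-inverse of \<open>paq\<close>.
  Conversely, if \<open>y\<close> is that inverse then \<open>qy\<close> and \<open>yp\<close> are the required one-sided
  inverses, and uniqueness of \<open>(b,c)\<close>-inverses gives \<open>y = zax\<close>.\<close>

lemma left_mult_set_subset_iff:
  "left_mult_set y \<subseteq> left_mult_set (c::'a::ring_1) \<longleftrightarrow> (\<exists>t. y = t * c)"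
proof
  assume "left_mult_set y \<subseteq> left_mult_set c"
  moreover have "y \<in> left_mult_set y"
    unfolding left_mult_set_def by (metis (mono_tags) mem_Collect_eq mult_1_left)
  ultimately show "\<exists>t. y = t * c" unfolding left_mult_set_def by blast
next
  assume "\<exists>t. y = t * c"
  then show "left_mult_set y \<subseteq> left_mult_set c"
    unfolding left_mult_set_def by (auto simp: mult.assoc[symmetric])
qed

lemma right_mult_set_subset_iff:
  "right_mult_set y \<subseteq> right_mult_set (b::'a::ring_1) \<longleftrightarrow> (\<exists>s. y = b * s)"
proof
  assume "right_mult_set y \<subseteq> right_mult_set b"
  moreover have "y \<in> right_mult_set y"
    unfolding right_mult_set_def by (metis (mono_tags) mem_Collect_eq mult_1_right)
  ultimately show "\<exists>s. y = b * s" unfolding right_mult_set_def by blast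
next
  assume "\<exists>s. y = b * s"
  then show "right_mult_set y \<subseteq> right_mult_set b"
    unfolding right_mult_set_def by (auto simp: mult.assoc)
qed

text \<open>The conditions \<open>y \<in> bRy \<inter> yRc\<close> may be weakened to \<open>y \<in> bR \<inter> Rc\<close>,
  because \<open>y = t c\<close> and \<open>c \<alpha> y = c\<close> give \<open>y = y \<alpha> y\<close>.\<close>

lemma bc_inverse_iff:
  "bc_inverse y (\<alpha>::'a::ring_1) b c \<longleftrightarrow>
     (\<exists>s. y = b * s) \<and> (\<exists>t. y = t * c) \<and> y * \<alpha> * b = b \<and> c * \<alpha> * y = c"
proof
  assume "bc_inverse y \<alpha> b c"
  then show "(\<exists>s. y = b * s) \<and> (\<exists>t. y = t * c) \<and> y * \<alpha> * b = b \<and> c * \<alpha> * y = c"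
    unfolding bc_inverse_def by (auto simp: mult.assoc) (metis mult.assoc)
next
  assume "(\<exists>s. y = b * s) \<and> (\<exists>t. y = t * c) \<and> y * \<alpha> * b = b \<and> c * \<alpha> * y = c"
  then obtain s t where s: "y = b * s" and t: "y = t * c"
    and yab: "y * \<alpha> * b = b" and cay: "c * \<alpha> * y = c" by blast
  have idem: "y = y * \<alpha> * y" using t cay by (metis mult.assoc)
  have "y = b * (s * \<alpha>) * y" using idem s by (simp add: mult.assoc)
  moreover have "y = y * (\<alpha> * t) * c" using idem t by (simp add: mult.assoc)
  ultimately show "bc_inverse y \<alpha> b c" unfolding bc_inverse_def using yab cay by blast
qed

lemma bc_inverse_unique:
  assumes "bc_inverse y (\<alpha>::'a::ring_1) b c" and "bc_inverse y' \<alpha> b c"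
  shows "y = y'"
proof -
  obtain t where t: "y = t * c" and yab: "y * \<alpha> * b = b"
    using assms(1) bc_inverse_iff by metis
  obtain s where s: "y' = b * s" and cay': "c * \<alpha> * y' = c"
    using assms(2) bc_inverse_iff by metis
  have "y = t * (c * \<alpha> * y')" using t cay' by simp
  also have "\<dots> = y * \<alpha> * b * s" using t s by (simp add: mult.assoc)
  also have "\<dots> = y'" using yab s by simp
  finally show ?thesis .
qed

lemma bc_inverse_right_factor:
  assumes "bc_inverse y (p * a * q) b (c::'a::ring_1)"
  shows "right_bc_inverse (q * y) (p * a) (q * b) (q * c)"
proof -
  obtain s where "y = b * s" and "c * (p * a * q) * y = c"
    using assms bc_inverse_iff by metis
  then show ?thesis
    unfolding right_bc_inverse_def right_mult_set_subset_iff by (metis mult.assoc)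
qed

lemma bc_inverse_left_factor:
  assumes "bc_inverse y (p * a * q) b (c::'a::ring_1)"
  shows "left_bc_inverse (y * p) (a * q) (b * p) (c * p)"
proof -
  obtain t where "y = t * c" and "y * (p * a * q) * b = b"
    using assms bc_inverse_iff by metis
  then show ?thesis
    unfolding left_bc_inverse_def left_mult_set_subset_iff by (metis mult.assoc)
qed

lemma right_bc_inverse_cancel:
  assumes "right_bc_inverse x (p * a) (q * b) (q * c)" and "q' * q * (c::'a::ring_1) = c"
  shows "c * p * a * x = c"
proof -
  have "q * c * (p * a) * x = q * c" using assms(1) unfolding right_bc_inverse_def by blast
  have "c * p * a * x = q' * (q * c * (p * a) * x)" using assms(2) by (metis mult.assoc)
  also have "\<dots> = c" using \<open>q * c * (p * a) * x = q * c\<close> assms(2) by (simp add: mult.assoc)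
  finally show ?thesis .
qed

lemma left_bc_inverse_cancel:
  assumes "left_bc_inverse z (a * q) (b * p) (c * p)" and "b * p * p' = (b::'a::ring_1)"
  shows "z * a * q * b = b"
proof -
  have "z * (a * q) * (b * p) = b * p" using assms(1) unfolding left_bc_inverse_def by blast
  then have "z * (a * q) * (b * p) * p' = b * p * p'" by simp
  then show ?thesis using assms(2) by (simp add: mult.assoc)
qed

lemma bc_inverse_of_one_sided_inverses:
  fixes a b c p q :: "'a::ring_1"
  assumes q': "q' * q * c = c" and p': "b * p * p' = b"
    and x: "right_bc_inverse x (p * a) (q * b) (q * c)"
    and z: "left_bc_inverse z (a * q) (b * p) (c * p)"
  shows "bc_inverse (z * a * x) (p * a * q) b c"
proof -
  obtain s where s: "x = q * b * s"
    using x unfolding right_bc_inverse_def right_mult_set_subset_iff by (metis mult.assoc)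
  obtain t where t: "z = t * (c * p)"
    using z unfolding left_bc_inverse_def left_mult_set_subset_iff by blast
  have cpax: "c * p * a * x = c" using right_bc_inverse_cancel[OF x q'] .
  have zaqb: "z * a * q * b = b" using left_bc_inverse_cancel[OF z p'] .
  have "z * a * x = b * s" using s zaqb by (metis mult.assoc)
  moreover have "z * a * x = t * c" using t cpax by (metis mult.assoc)
  moreover have "z * a * x * (p * a * q) * b = b"
  proof -
    have "z * a * x * (p * a * q) * b = t * (c * p * a * x) * p * a * q * b"
      using t by (simp add: mult.assoc)
    also have "\<dots> = z * a * q * b" using cpax t by (simp add: mult.assoc)
    finally show ?thesis using zaqb by simp
  qed
  moreover have "c * (p * a * q) * (z * a * x) = c"
  proof -
    have "q * (z * a * x) = q * (z * a * q * b) * s" using s by (simp add: mult.assoc)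
    also have "\<dots> = x" using zaqb s by (simp add: mult.assoc)
    finally have "c * (p * a * q) * (z * a * x) = c * p * a * x" by (metis mult.assoc)
    then show ?thesis using cpax by simp
  qed
  ultimately show ?thesis unfolding bc_inverse_iff by blast
qed

theorem theorem3p6:
  fixes a b c p q :: "'a::ring_1"
  assumes "\<exists>p' q'. q' * q * c = c \<and> b * p * p' = b"
  shows "(bc_invertible (p * a * q) b c \<longleftrightarrow>
            right_bc_invertible (p * a) (q * b) (q * c) \<and> left_bc_invertible (a * q) (b * p) (c * p))
         \<and> (\<forall>y x z. bc_inverse y (p * a * q) b c \<and> right_bc_inverse x (p * a) (q * b) (q * c)
                     \<and> left_bc_inverse z (a * q) (b * p) (c * p) \<longrightarrow> y = z * a * x)"
proof -
  obtain p' q' where q': "q' * q * c = c" and p': "b * p * p' = b" using assms by blast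
  note combine = bc_inverse_of_one_sided_inverses[OF q' p']
  show ?thesis
    unfolding bc_invertible_def right_bc_invertible_def left_bc_invertible_def
    using bc_inverse_right_factor bc_inverse_left_factor combine bc_inverse_unique by blast
qed

end
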